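(* Assume $\Sigma$, $\Sigma^\pi$, $\widehat\Sigma$ are invertible and $\|(\Sigma^\pi)^{1/2}M^\pi(\Sigma^\pi)^{-1/2}\|_2\le1$. Let $\Delta X:=N\widehat\Sigma^{-1}-\Sigma^{-1}$, $\Delta M^\pi:=\widehat M^\pi-M^\pi$, $\Delta Y^\pi:=\frac1N\sum_{n=1}^N\phi(s_n,a_n)\phi^\pi(s_n')^\top-\Sigma M^\pi$, and $\Delta W_h^\pi:=\frac1N\sum_{n=1}^N\phi(s_n,a_n)\big(Q_h^\pi(s_n,a_n)-r_n'-V_{h+1}^\pi(s_n')\big)$. Then: (1) $|E_2|\le\sum_{h=0}^H\sqrt{(\nu_0^\pi)^\top(\Sigma^\pi)^{-1}\nu_0^\pi}\,\|(\Sigma^\pi)^{1/2}\Sigma^{-1/2}\|_2\,\|\Sigma^{-1/2}\Delta W_h^\pi\|_2\Big((1+\|(\Sigma^\pi)^{1/2}\Delta M^\pi(\Sigma^\pi)^{-1/2}\|_2)^h(1+\|\Sigma^{1/2}\Delta X\Sigma^{1/2}\|_2)-1\Big)$; (2) $\|(\Sigma^\pi)^{1/2}\Delta M^\pi(\Sigma^\pi)^{-1/2}\|_2\le\sqrt{\kappa_1}\Big((1+\|\Sigma^{1/2}\Delta X\Sigma^{1/2}\|_2)(1+\|\Sigma^{-1/2}\Delta Y^\pi\Sigma^{-1/2}\|_2)-1\Big)$; (3) if $\|N^{-1}\Sigma^{-1/2}\widehat\Sigma\Sigma^{-1/2}-I\|_2\le\frac12$, then $\|\Sigma^{1/2}\Delta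 X\Sigma^{1/2}\|_2\le2\|N^{-1}\Sigma^{-1/2}\widehat\Sigma\Sigma^{-1/2}-I\|_2$. Here $E_2:=\sum_{h=0}^H\big(N(\widehat\nu_h^\pi)^\top\widehat\Sigma^{-1}-(\nu_h^\pi)^\top\Sigma^{-1}\big)\Delta W_h^\pi$.
   Context: MDP setting with $\mathcal X=\mathcal S\times\mathcal A$, target policy $\pi$, horizon $H$, initial distribution $\xi_0$, value functions $Q_h^\pi(s,a)=\mathbb E^\pi[\sum_{h'=h}^Hr(s_{h'},a_{h'})\mid s_h=s,a_h=a]$, $V_h^\pi(s)=\int Q_h^\pi(s,a)\pi(a\mid s)da$, $V_{H+1}^\pi=0$. $\phi:\mathcal X\to\mathbb R^d$, $\phi^\pi(s)=\int\phi(s,a)\pi(a\mid s)da$, $M^\pi\in\mathbb R^{d\times d}$ any matrix (in the paper, the one with $\phi(s,a)^\top M^\pi=\mathbb E[\phi^\pi(s')^\top\mid s,a]$). Data $\{(s_n,a_n,s_n',r_n')\}_{n=1}^N$, $\lambda\ge0$, $\widehat\Sigma=\lambda I+\sum_n\phi(s_n,a_n)\phi(s_n,a_n)^\top$, $\widehat M^\pi=\widehat\Sigma^{-1}\sum_n\phi(s_n,a_n)\phi^\pi(s_n')^\top$, $\nu_0^\pi=\mathbb E[\phi(s,a)\mid s\sim\xi_0,a\sim\pi(\cdot\mid s)]$, $\nu_h^\pi=((M^\pi)^\top)^h\nu_0^\pi$, $\widehat\nu_h^\pi=((\widehat M^\pi)^\top)^h\nu_0^\pi$. $\Sigma,\Sigma^\pi$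 are symmetric positive definite $d\times d$ matrices (in the paper the data covariance and the covariance of $\phi^\pi$ under an invariant distribution of the target policy), and $\kappa_1:=\mathrm{cond}(\Sigma^{-1/2}\Sigma^\pi\Sigma^{-1/2})$. *)

theory Defs
  imports "HOL-Analysis.Analysis"
begin

definition psd_mat :: "real^'d^'d \<Rightarrow> bool" where
  "psd_mat A \<longleftrightarrow> transpose A = A \<and> (\<forall>x. 0 \<le> x \<bullet> (A *v x))"

definition spd_mat :: "real^'d^'d \<Rightarrow> bool" where
  "spd_mat A \<longleftrightarrow> transpose A = A \<and> (\<forall>x. x \<noteq> 0 \<longrightarrow> 0 < x \<bullet> (A *v x))"

definition msqrt :: "real^'d^'d \<Rightarrow> real^'d^'d" where
  "msqrt A = (THE S. psd_mat S \<and> S ** S = A)"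

definition minvsqrt :: "real^'d^'d \<Rightarrow> real^'d^'d" where
  "minvsqrt A = matrix_inv (msqrt A)"

definition opnorm2 :: "real^'d^'d \<Rightarrow> real" where
  "opnorm2 A = onorm (\<lambda>x. A *v x)"

definition cond2 :: "real^'d^'d \<Rightarrow> real" where
  "cond2 A = opnorm2 A * opnorm2 (matrix_inv A)"

definition outer :: "real^'d \<Rightarrow> real^'d \<Rightarrow> real^'d^'d" where
  "outer u v = (\<chi> i j. u$i * v$j)"

fun matpow :: "real^'d^'d \<Rightarrow> nat \<Rightarrow> real^'d^'d" where
  "matpow A 0 = mat 1"
| "matpow A (Suc k) = A ** matpow A k"

definition phi_pi :: "('s \<Rightarrow> 'a \<Rightarrow> real^'d) \<Rightarrow> ('s \<Rightarrow> 'a measure) \<Rightarrow> 's \<Rightarrow> real^'d" where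
  "phi_pi phi pol s = (\<integral>a. phi s a \<partial>(pol s))"

definition nu0 :: "('s \<Rightarrow> 'a \<Rightarrow> real^'d) \<Rightarrow> ('s \<Rightarrow> 'a measure) \<Rightarrow> 's measure \<Rightarrow> real^'d" where
  "nu0 phi pol xi0 = (\<integral>s. phi_pi phi pol s \<partial>xi0)"

definition V_pi :: "(nat \<Rightarrow> 's \<Rightarrow> 'a \<Rightarrow> real) \<Rightarrow> ('s \<Rightarrow> 'a measure) \<Rightarrow> nat \<Rightarrow> nat \<Rightarrow> 's \<Rightarrow> real" where
  "V_pi Q pol H h s = (if h \<le> H then (\<integral>a. Q h s a \<partial>(pol s)) else 0)"

definition Sigma_hat :: "('s \<Rightarrow> 'a \<Rightarrow> real^'d) \<Rightarrow> real \<Rightarrow> nat \<Rightarrow> (nat \<Rightarrow> 's) \<Rightarrow> (nat \<Rightarrow> 'a) \<Rightarrow> real^'d^'d" where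
  "Sigma_hat phi lam N s a = lam *\<^sub>R mat 1 + (\<Sum>n=1..N. outer (phi (s n) (a n)) (phi (s n) (a n)))"

definition M_hat :: "('s \<Rightarrow> 'a \<Rightarrow> real^'d) \<Rightarrow> ('s \<Rightarrow> 'a measure) \<Rightarrow> real \<Rightarrow> nat \<Rightarrow> (nat \<Rightarrow> 's) \<Rightarrow> (nat \<Rightarrow> 'a) \<Rightarrow> (nat \<Rightarrow> 's) \<Rightarrow> real^'d^'d" where
  "M_hat phi pol lam N s a s' = matrix_inv (Sigma_hat phi lam N s a) **
     (\<Sum>n=1..N. outer (phi (s n) (a n)) (phi_pi phi pol (s' n)))"

end

theory Submission
  imports Defs
begin

text \<open>All three bounds are matrix inequalities in whitened coordinates, i.e. after conjugating
  by \<open>\<Sigma>\<^sup>1\<^sup>/\<^sup>2\<close> and \<open>(\<Sigma>\<^sup>\<pi>)\<^sup>1\<^sup>/\<^sup>2\<close>.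
  For (3), \<open>\<Sigma>\<^sup>1\<^sup>/\<^sup>2 \<Delta>X \<Sigma>\<^sup>1\<^sup>/\<^sup>2 = U - I\<close> where \<open>U\<close> is the inverse of
  \<open>T = N\<^sup>-\<^sup>1 \<Sigma>\<^sup>-\<^sup>1\<^sup>/\<^sup>2 \<Sigma>\<^sup>^ \<Sigma>\<^sup>-\<^sup>1\<^sup>/\<^sup>2\<close>, and an inverse of a
  perturbation \<open>I + E\<close> of the identity with \<open>\<parallel>E\<parallel> \<le> 1/2\<close> is within \<open>2\<parallel>E\<parallel>\<close> of \<open>I\<close>.
  For (2), expanding \<open>(\<Sigma>\<^sup>-\<^sup>1 + \<Delta>X)(\<Delta>Y + \<Sigma>M)\<close> gives
  \<open>\<Delta>M = \<Sigma>\<^sup>-\<^sup>1\<Delta>Y + \<Delta>X\<Delta>Y + \<Delta>X\<Sigma>M\<close>; each term, whitened, is a product of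
  \<open>\<Sigma>\<^sup>1\<^sup>/\<^sup>2\<Delta>X\<Sigma>\<^sup>1\<^sup>/\<^sup>2\<close>, \<open>\<Sigma>\<^sup>-\<^sup>1\<^sup>/\<^sup>2\<Delta>Y\<Sigma>\<^sup>-\<^sup>1\<^sup>/\<^sup>2\<close>,
  the contraction \<open>(\<Sigma>\<^sup>\<pi>)\<^sup>1\<^sup>/\<^sup>2M(\<Sigma>\<^sup>\<pi>)\<^sup>-\<^sup>1\<^sup>/\<^sup>2\<close> and two cross factors
  whose norms multiply to at most \<open>\<surd>\<kappa>\<^sub>1\<close>.
  For (1), whitened by \<open>(\<Sigma>\<^sup>\<pi>)\<^sup>-\<^sup>1\<^sup>/\<^sup>2\<close> the recursion for \<open>\<nu>\<^sub>h\<close> is driven by a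
  contraction and that for \<open>\<nu>\<^sup>^\<^sub>h\<close> by a perturbation of it, so the two iterates differ by at
  most \<open>((1 + \<parallel>\<Delta>M\<parallel>)\<^sup>h - 1)\<parallel>\<nu>\<^sub>0\<parallel>\<close>; each summand of \<open>E\<^sub>2\<close> splits into this
  error and the error of \<open>N\<Sigma>\<^sup>^\<^sup>-\<^sup>1\<close>, and Cauchy-Schwarz finishes.
  The matrix square roots exist and are unique by the spectral theorem, proved here by maximising
  the Rayleigh quotient.\<close>

section \<open>Matrix algebra\<close>

lemma inner_matrix_vector_transpose: "x \<bullet> ((A::real^'n^'m) *v y) = (transpose A *v x) \<bullet> y"
  by (metis dot_lmul_matrix transpose_matrix_vector)

lemma matrix_add_rdistrib: "((A::'a::semiring_1^'n^'m) + B) ** C = A ** C + B ** C"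
  by (vector matrix_matrix_mult_def sum.distrib[symmetric] field_simps)

lemma matrix_diff_ldistrib: "(A::'a::ring_1^'n^'m) ** (B - C) = A ** B - A ** C"
  by (vector matrix_matrix_mult_def sum_subtractf[symmetric] algebra_simps)

lemma matrix_diff_rdistrib: "((A::'a::ring_1^'n^'m) - B) ** C = A ** C - B ** C"
  by (vector matrix_matrix_mult_def sum_subtractf[symmetric] algebra_simps)

lemma matrix_scaleR_mult_left: "(c *\<^sub>R (A::'a::real_algebra_1^'n^'m)) ** B = c *\<^sub>R (A ** B)"
  by (simp add: scalar_matrix_assoc)

lemma matrix_scaleR_mult_right: "(A::'a::real_algebra_1^'n^'m) ** (c *\<^sub>R B) = c *\<^sub>R (A ** B)"
  by (simp add: matrix_scalar_ac scalar_matrix_assoc)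

lemma transpose_diff: "transpose ((A::'a::group_add^'n^'m) - B) = transpose A - transpose B"
  by (simp add: vec_eq_iff transpose_def)

lemma outer_mult_vector: "outer u v *v w = (v \<bullet> w) *\<^sub>R (u :: real^'n)"
  by (simp add: vec_eq_iff matrix_vector_mult_def outer_def inner_vec_def sum_distrib_left
      mult.commute mult.left_commute)

lemma sum_matrix_vector_mult: "sum f B *v (w::real^'n) = (\<Sum>u\<in>B. f u *v w)"
  by (induction B rule: infinite_finite_induct) (simp_all add: matrix_vector_mult_add_rdistrib)

lemma matrix_mul_inverse_cancel: "(A::'a::semiring_1^'n^'m) ** B = mat 1 \<Longrightarrow> A ** (B ** X) = X"
  by (simp add: matrix_mul_assoc)

lemma matpow_similar:
  fixes A P Pi :: "real^'n^'n"
  assumes "Pi ** P = mat 1"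
  shows "matpow (Pi ** A ** P) h = Pi ** matpow A h ** P"
proof (induction h)
  case 0 show ?case using assms by simp
next
  case (Suc h)
  have "Pi ** A ** P ** (Pi ** matpow A h ** P) = Pi ** A ** (P ** Pi) ** matpow A h ** P"
    by (simp add: matrix_mul_assoc)
  also have "P ** Pi = mat 1" using assms matrix_left_right_inverse by blast
  finally show ?case using Suc by (simp add: matrix_mul_assoc)
qed

lemma
  fixes A :: "'a::semiring_1^'n^'m"
  assumes "invertible A"
  shows matrix_inv_right: "A ** matrix_inv A = mat 1" and matrix_inv_left: "matrix_inv A ** A = mat 1"
  using someI_ex[OF assms[unfolded invertible_def]] unfolding matrix_inv_def by auto

lemma matrix_inv_unique:
  assumes "(A::'a::field^'n^'n) ** B = mat 1"
  shows "matrix_inv A = B"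
proof -
  have "B ** A = mat 1" using assms matrix_left_right_inverse by blast
  hence "matrix_inv A ** A = mat 1" using assms invertible_def matrix_inv_left by blast
  hence "matrix_inv A = matrix_inv A ** (A ** B)" using assms by simp
  also have "\<dots> = B" by (simp add: matrix_mul_assoc \<open>matrix_inv A ** A = mat 1\<close>)
  finally show ?thesis .
qed

lemma matrix_inv_symmetric:
  assumes "transpose (A::'a::field^'n^'n) = A" "invertible A"
  shows "transpose (matrix_inv A) = matrix_inv A"
proof -
  have "A ** transpose (matrix_inv A) = mat 1"
    using matrix_inv_left[OF assms(2)] matrix_transpose_mul[of "matrix_inv A" A] assms(1) by simp
  thus ?thesis using matrix_inv_unique by metis
qed

section \<open>Spectral theorem for symmetric matrices\<close>

text \<open>A maximiser of the Rayleigh quotient on an invariant subspace is an eigenvector: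
  perturbing it along the component of its image orthogonal to it would increase the quotient.\<close>
lemma rayleigh_maximiser_eigenvector:
  fixes A :: "real^'n^'n"
  assumes sym: "transpose A = A" and V: "subspace V" and u: "u \<in> V" "norm u = 1"
    and Au: "A *v u \<in> V"
    and max: "\<And>v. v \<in> V \<Longrightarrow> v \<bullet> (A *v v) \<le> (u \<bullet> (A *v u)) * (v \<bullet> v)"
  shows "A *v u = (u \<bullet> (A *v u)) *\<^sub>R u"
proof -
  define l where "l = u \<bullet> (A *v u)"
  define z where "z = A *v u - l *\<^sub>R u"
  have uu: "u \<bullet> u = 1" using u by (simp add: dot_square_norm)
  have zu: "z \<bullet> u = 0" unfolding z_def l_def using uu
    by (simp add: inner_diff_left inner_diff_right inner_commute)
  have zAu: "z \<bullet> (A *v u) = z \<bullet> z"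
    using zu unfolding z_def by (simp add: inner_diff_right inner_commute)
  have uAz: "u \<bullet> (A *v z) = z \<bullet> z"
    using zAu inner_matrix_vector_transpose[of u A z] sym by (simp add: inner_commute)
  have zV: "z \<in> V" unfolding z_def by (meson Au V u(1) subspace_diff subspace_scale)
  have key: "2 * t * (z \<bullet> z) \<le> t\<^sup>2 * (l * (z \<bullet> z) - z \<bullet> (A *v z))" for t :: real
  proof -
    have "u + t *\<^sub>R z \<in> V" by (meson V zV u(1) subspace_add subspace_scale)
    moreover have "(u + t *\<^sub>R z) \<bullet> (A *v (u + t *\<^sub>R z))
        = l + 2 * t * (z \<bullet> z) + t\<^sup>2 * (z \<bullet> (A *v z))"
      using uAz zAu
      by (simp add: l_def matrix_vector_right_distrib matrix_vector_mult_scaleR inner_add_left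
          inner_add_right power2_eq_square algebra_simps)
    moreover have "(u + t *\<^sub>R z) \<bullet> (u + t *\<^sub>R z) = 1 + t\<^sup>2 * (z \<bullet> z)"
      using zu uu by (simp add: inner_add_left inner_add_right inner_commute power2_eq_square
          algebra_simps)
    ultimately show ?thesis using max[of "u + t *\<^sub>R z"] by (simp add: l_def algebra_simps)
  qed
  have "z \<bullet> z = 0"
  proof (rule ccontr)
    assume "z \<bullet> z \<noteq> 0"
    hence q: "z \<bullet> z > 0" by (simp add: order_less_le)
    define D where "D = l * (z \<bullet> z) - z \<bullet> (A *v z)"
    define t where "t = (z \<bullet> z) / (\<bar>D\<bar> + 1)"
    have t: "t > 0" using q by (simp add: t_def)
    have "2 * t * (z \<bullet> z) \<le> t\<^sup>2 * D" using key[of t] by (simp add: D_def)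
    hence "2 * (z \<bullet> z) \<le> t * D" using t by (simp add: power2_eq_square)
    also have "\<dots> \<le> t * \<bar>D\<bar>" using t by (simp add: mult_left_mono)
    also have "\<dots> < z \<bullet> z" using q by (simp add: t_def field_simps)
    finally show False using q by simp
  qed
  thus ?thesis unfolding z_def l_def by simp
qed

lemma invariant_subspace_orthonormal_eigenbasis:
  fixes A :: "real^'n^'n"
  assumes sym: "transpose A = A"
  shows "subspace V \<Longrightarrow> (\<forall>x\<in>V. A *v x \<in> V) \<Longrightarrow>
    \<exists>B. B \<subseteq> V \<and> finite B \<and> pairwise orthogonal B \<and> (\<forall>u\<in>B. norm u = 1) \<and> span B = V \<and>
      (\<forall>u\<in>B. A *v u = (u \<bullet> (A *v u)) *\<^sub>R u)"
proof (induction "dim V" arbitrary: V rule: less_induct)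
  case less
  note V = less.prems(1) and inv = less.prems(2)
  show ?case
  proof (cases "V = {0}")
    case True
    show ?thesis by (rule exI[of _ "{}"]) (simp add: True)
  next
    case False
    then obtain x where x: "x \<in> V" "x \<noteq> 0" using V subspace_0 by blast
    define K where "K = V \<inter> sphere 0 1"
    have "compact K" unfolding K_def by (simp add: V closed_Int_compact closed_subspace)
    moreover have "(1 / norm x) *\<^sub>R x \<in> K" unfolding K_def using x V by (simp add: subspace_scale)
    moreover have "continuous_on K (\<lambda>v. v \<bullet> (A *v v))"
      by (intro continuous_intros matrix_vector_mult_linear_continuous_on)
    ultimately obtain u where uK: "u \<in> K" and umax: "\<And>w. w \<in> K \<Longrightarrow> w \<bullet> (A *v w) \<le> u \<bullet> (A *v u)"
      using continuous_attains_sup[of K "\<lambda>v. v \<bullet> (A *v v)"] by blast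
    have uV: "u \<in> V" and un: "norm u = 1" using uK by (auto simp: K_def)
    have mx: "v \<bullet> (A *v v) \<le> (u \<bullet> (A *v u)) * (v \<bullet> v)" if vV: "v \<in> V" for v
    proof (cases "v = 0")
      case False
      define w where "w = (1 / norm v) *\<^sub>R v"
      have "w \<in> K" unfolding K_def w_def using False vV V by (simp add: subspace_scale)
      hence "w \<bullet> (A *v w) \<le> u \<bullet> (A *v u)" using umax by blast
      moreover have "w \<bullet> (A *v w) = (v \<bullet> (A *v v)) / (norm v)\<^sup>2"
        unfolding w_def by (simp add: matrix_vector_mult_scaleR power2_eq_square)
      ultimately show ?thesis using False by (simp add: field_simps dot_square_norm)
    qed simp
    have eig: "A *v u = (u \<bullet> (A *v u)) *\<^sub>R u"
      using rayleigh_maximiser_eigenvector[OF sym V uV un] inv uV mx by blast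
    define V' where "V' = V \<inter> {x. u \<bullet> x = 0}"
    have V': "subspace V'" unfolding V'_def by (simp add: V subspace_hyperplane subspace_inter)
    have inv': "\<forall>x\<in>V'. A *v x \<in> V'"
    proof
      fix y assume y: "y \<in> V'"
      have "u \<bullet> (A *v y) = (A *v u) \<bullet> y" using inner_matrix_vector_transpose sym by metis
      also have "\<dots> = 0" using y by (subst eig) (simp add: V'_def)
      finally show "A *v y \<in> V'" using y inv by (simp add: V'_def)
    qed
    have "u \<notin> V'" using un unfolding V'_def by (auto simp: dot_square_norm)
    hence "V' \<subset> V" using uV unfolding V'_def by blast
    hence "dim V' < dim V" using V V' by (metis dim_psubset span_eq_iff)
    then obtain B' where B': "B' \<subseteq> V'" "finite B'" "pairwise orthogonal B'" "\<forall>u\<in>B'. norm u = 1"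
      "span B' = V'" "\<forall>u\<in>B'. A *v u = (u \<bullet> (A *v u)) *\<^sub>R u"
      using less.hyps[OF _ V' inv'] by blast
    have "span (insert u B') = V"
    proof
      show "span (insert u B') \<subseteq> V"
        using B'(1) uV V unfolding V'_def by (intro span_minimal) auto
      show "V \<subseteq> span (insert u B')"
      proof
        fix y assume y: "y \<in> V"
        have "y - (u \<bullet> y) *\<^sub>R u \<in> V'" unfolding V'_def using y uV V un
          by (simp add: subspace_diff subspace_scale inner_diff_right dot_square_norm)
        hence "y - (u \<bullet> y) *\<^sub>R u \<in> span (insert u B')" using B'(5)
          by (metis span_mono subset_insertI subsetD)
        moreover have "(u \<bullet> y) *\<^sub>R u \<in> span (insert u B')" by (simp add: span_base span_mul)
        ultimately show "y \<in> span (insert u B')" using span_add by fastforce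
      qed
    qed
    moreover have "pairwise orthogonal (insert u B')"
      using B'(1,3) unfolding V'_def orthogonal_def
      by (auto simp: pairwise_insert inner_commute)
    ultimately show ?thesis
      using B' uV un eig V'_def by (intro exI[of _ "insert u B'"]) auto
  qed
qed

lemma symmetric_orthonormal_eigenbasis:
  fixes A :: "real^'n^'n"
  assumes "transpose A = A"
  obtains B where "finite B" "pairwise orthogonal B" "\<forall>u\<in>B. norm u = 1" "span B = UNIV"
    "\<forall>u\<in>B. A *v u = (u \<bullet> (A *v u)) *\<^sub>R u"
  using invariant_subspace_orthonormal_eigenbasis[OF assms, of UNIV] by auto

section \<open>Square roots of positive semidefinite matrices\<close>

lemma psd_square_root_eigenvector:
  fixes A S :: "real^'n^'n"
  assumes S: "psd_mat S" and SS: "S ** S = A" and u: "A *v u = l *\<^sub>R u" and l: "0 \<le> l"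
  shows "S *v u = sqrt l *\<^sub>R u"
proof -
  define r where "r = sqrt l"
  have r: "0 \<le> r" "r * r = l" using l by (auto simp: r_def)
  have Ssym: "transpose S = S" and Spos: "\<And>x. 0 \<le> x \<bullet> (S *v x)" using S by (auto simp: psd_mat_def)
  define v where "v = S *v u - r *\<^sub>R u"
  have SSu: "S *v (S *v u) = l *\<^sub>R u" using u SS by (simp add: matrix_vector_mul_assoc)
  have Sv: "S *v v = - r *\<^sub>R v"
    unfolding v_def using SSu r(2)[symmetric]
    by (simp add: matrix_vector_mult_diff_distrib matrix_vector_mult_scaleR algebra_simps)
  have "v \<bullet> v = v \<bullet> (S *v u) - r * (v \<bullet> u)"
    unfolding v_def by (simp only: inner_diff_right inner_scaleR_right)
  also have "v \<bullet> (S *v u) = (S *v v) \<bullet> u" using inner_matrix_vector_transpose Ssym by metis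
  finally have vv: "v \<bullet> v = -2 * r * (v \<bullet> u)" using Sv by simp
  have "0 \<le> - r * (v \<bullet> v)" using Spos[of v] Sv by simp
  moreover have "0 \<le> r * (v \<bullet> v)" using r(1) by simp
  ultimately have "r * (v \<bullet> v) = 0" by linarith
  hence "v \<bullet> v = 0" using vv by auto
  thus ?thesis unfolding v_def r_def by simp
qed

lemma psd_sqrt_unique:
  fixes A S1 S2 :: "real^'n^'n"
  assumes A: "psd_mat A" and S1: "psd_mat S1" "S1 ** S1 = A" and S2: "psd_mat S2" "S2 ** S2 = A"
  shows "S1 = S2"
proof -
  obtain B where B: "span B = UNIV" "\<forall>u\<in>B. A *v u = (u \<bullet> (A *v u)) *\<^sub>R u"
    using symmetric_orthonormal_eigenbasis[of A] A unfolding psd_mat_def by metis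
  have "S1 *v x = S2 *v x" for x
  proof (rule linear_eq_on_span[of "(*v) S1" "(*v) S2" B])
    fix w assume w: "w \<in> B"
    have "0 \<le> w \<bullet> (A *v w)" using A by (simp add: psd_mat_def)
    thus "S1 *v w = S2 *v w"
      using psd_square_root_eigenvector[OF S1 B(2)[rule_format, OF w]]
        psd_square_root_eigenvector[OF S2 B(2)[rule_format, OF w]] by simp
  qed (use B in auto)
  thus ?thesis by (simp add: matrix_eq)
qed

lemma psd_sqrt_exists:
  fixes A :: "real^'n^'n"
  assumes A: "psd_mat A"
  shows "\<exists>S. psd_mat S \<and> S ** S = A"
proof -
  obtain B where B: "finite B" "pairwise orthogonal B" "\<forall>u\<in>B. norm u = 1" "span B = UNIV"
    "\<forall>u\<in>B. A *v u = (u \<bullet> (A *v u)) *\<^sub>R u"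
    using symmetric_orthonormal_eigenbasis[of A] A unfolding psd_mat_def by metis
  define c where "c u = sqrt (u \<bullet> (A *v u))" for u
  define S where "S = (\<Sum>u\<in>B. c u *\<^sub>R outer u u)"
  have c0: "0 \<le> c u" for u unfolding c_def using A by (simp add: psd_mat_def)
  have Sx: "S *v x = (\<Sum>u\<in>B. (c u * (u \<bullet> x)) *\<^sub>R u)" for x
    unfolding S_def sum_matrix_vector_mult scaleR_matrix_vector_assoc[symmetric] outer_mult_vector
    by simp
  have Sw: "S *v w = c w *\<^sub>R w" if w: "w \<in> B" for w
  proof -
    have "S *v w = (c w * (w \<bullet> w)) *\<^sub>R w + (\<Sum>u\<in>B - {w}. (c u * (u \<bullet> w)) *\<^sub>R u)"
      unfolding Sx using B(1) w by (simp add: sum.remove)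
    also have "(\<Sum>u\<in>B - {w}. (c u * (u \<bullet> w)) *\<^sub>R u) = 0"
      using B(2) w by (intro sum.neutral) (auto simp: pairwise_def orthogonal_def)
    finally show ?thesis using B(3) w by (simp add: dot_square_norm)
  qed
  have "transpose S = S"
    unfolding S_def by (simp add: vec_eq_iff transpose_def sum_component outer_def mult.commute)
  moreover have "0 \<le> x \<bullet> (S *v x)" for x
    unfolding Sx inner_sum_right using c0
    by (auto intro!: sum_nonneg simp: inner_commute mult.assoc)
  moreover have "(S ** S) *v x = A *v x" for x
  proof (rule linear_eq_on_span[of "(*v) (S ** S)" "(*v) A" B])
    fix w assume w: "w \<in> B"
    have "(S ** S) *v w = (c w * c w) *\<^sub>R w"
      by (simp add: matrix_vector_mul_assoc[symmetric] Sw[OF w] matrix_vector_mult_scaleR)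
    also have "c w * c w = w \<bullet> (A *v w)" unfolding c_def using A by (simp add: psd_mat_def)
    finally show "(S ** S) *v w = A *v w" using B(5) w by simp
  qed (use B in auto)
  ultimately show ?thesis unfolding psd_mat_def by (metis matrix_eq)
qed

lemma msqrt_psd:
  fixes A :: "real^'n^'n"
  assumes "psd_mat A"
  shows "psd_mat (msqrt A) \<and> msqrt A ** msqrt A = A"
proof -
  have "\<exists>!S. psd_mat S \<and> S ** S = A"
    using psd_sqrt_exists[OF assms] psd_sqrt_unique[OF assms] by blast
  thus ?thesis unfolding msqrt_def by (rule theI')
qed

lemma spd_imp_psd: "spd_mat A \<Longrightarrow> psd_mat A"
  unfolding spd_mat_def psd_mat_def by (metis inner_zero_left order_le_less)

lemma spd_imp_invertible:
  assumes "spd_mat (A::real^'n^'n)"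
  shows "invertible A"
proof -
  have "inj ((*v) A)" unfolding vec.inj_iff_eq_0
    using assms unfolding spd_mat_def by (metis inner_zero_right less_irrefl)
  thus ?thesis using matrix_left_invertible_injective invertible_left_inverse by blast
qed

lemma
  fixes A :: "real^'n^'n"
  assumes "spd_mat A"
  shows msqrt_symmetric: "transpose (msqrt A) = msqrt A"
    and msqrt_square: "msqrt A ** msqrt A = A"
    and msqrt_minvsqrt: "msqrt A ** minvsqrt A = mat 1"
    and minvsqrt_msqrt: "minvsqrt A ** msqrt A = mat 1"
    and minvsqrt_symmetric: "transpose (minvsqrt A) = minvsqrt A"
    and matrix_inv_minvsqrt: "matrix_inv A = minvsqrt A ** minvsqrt A"
proof -
  have m: "psd_mat (msqrt A)" "msqrt A ** msqrt A = A" using msqrt_psd[OF spd_imp_psd[OF assms]] by auto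
  show t: "transpose (msqrt A) = msqrt A" using m by (simp add: psd_mat_def)
  show "msqrt A ** msqrt A = A" by fact
  have "det (msqrt A) \<noteq> 0"
    using spd_imp_invertible[OF assms] invertible_det_nz m(2) det_mul by (metis mult_zero_left)
  hence i: "invertible (msqrt A)" using invertible_det_nz by blast
  show "msqrt A ** minvsqrt A = mat 1" "minvsqrt A ** msqrt A = mat 1"
    using matrix_inv_left[OF i] matrix_inv_right[OF i] by (auto simp: minvsqrt_def)
  show "transpose (minvsqrt A) = minvsqrt A" unfolding minvsqrt_def by (rule matrix_inv_symmetric[OF t i])
  have "A ** (minvsqrt A ** minvsqrt A) = msqrt A ** ((msqrt A ** minvsqrt A) ** minvsqrt A)"
    using m(2) by (simp add: matrix_mul_assoc)
  also have "\<dots> = mat 1" using matrix_inv_right[OF i] by (simp add: minvsqrt_def)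
  finally show "matrix_inv A = minvsqrt A ** minvsqrt A" by (rule matrix_inv_unique)
qed

section \<open>The spectral norm\<close>

lemma opnorm2_mult_vector: "norm ((A::real^'n^'n) *v x) \<le> opnorm2 A * norm x"
  unfolding opnorm2_def by (rule onorm[OF matrix_vector_mul_bounded_linear])

lemma opnorm2_nonneg: "0 \<le> opnorm2 (A::real^'n^'n)"
  unfolding opnorm2_def by (rule onorm_pos_le[OF matrix_vector_mul_bounded_linear])

lemma opnorm2_le:
  "0 \<le> b \<Longrightarrow> (\<And>x. norm ((A::real^'n^'n) *v x) \<le> b * norm x) \<Longrightarrow> opnorm2 A \<le> b"
  unfolding opnorm2_def by (rule onorm_bound)

lemma opnorm2_mult: "opnorm2 ((A::real^'n^'n) ** B) \<le> opnorm2 A * opnorm2 B"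
proof -
  have "(\<lambda>x. (A ** B) *v x) = (\<lambda>x. A *v x) \<circ> (\<lambda>x. B *v x)"
    by (simp add: fun_eq_iff matrix_vector_mul_assoc)
  thus ?thesis unfolding opnorm2_def by (simp add: onorm_compose matrix_vector_mul_bounded_linear)
qed

lemma opnorm2_mult3: "opnorm2 ((A::real^'n^'n) ** B ** C) \<le> opnorm2 A * opnorm2 B * opnorm2 C"
  by (meson opnorm2_mult opnorm2_nonneg mult_right_mono order_trans)

lemma opnorm2_mult4:
  "opnorm2 ((A::real^'n^'n) ** B ** C ** D) \<le> opnorm2 A * opnorm2 B * opnorm2 C * opnorm2 D"
  by (meson opnorm2_mult opnorm2_mult3 opnorm2_nonneg mult_right_mono order_trans)

lemma opnorm2_add: "opnorm2 ((A::real^'n^'n) + B) \<le> opnorm2 A + opnorm2 B"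
  unfolding opnorm2_def matrix_vector_mult_add_rdistrib
  by (rule onorm_triangle) (rule matrix_vector_mul_bounded_linear)+

lemma opnorm2_zero: "opnorm2 (0::real^'n^'n) = 0"
  by (simp add: opnorm2_def onorm_zero)

lemma opnorm2_mat_1: "opnorm2 (mat 1 :: real^'n^'n) \<le> 1"
  by (rule opnorm2_le) simp_all

lemma opnorm2_transpose: "opnorm2 (transpose (A::real^'n^'n)) = opnorm2 A"
proof -
  have le: "opnorm2 (transpose B) \<le> opnorm2 B" for B :: "real^'n^'n"
  proof (rule opnorm2_le[OF opnorm2_nonneg])
    fix y
    define z where "z = transpose B *v y"
    have "norm z * norm z = y \<bullet> (B *v z)"
      unfolding z_def by (simp add: inner_matrix_vector_transpose dot_square_norm power2_eq_square)
    also have "\<dots> \<le> norm y * (opnorm2 B * norm z)"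
      by (meson Cauchy_Schwarz_ineq2 abs_le_D1 mult_left_mono norm_ge_zero opnorm2_mult_vector
          order_trans)
    finally have "norm z * norm z \<le> (opnorm2 B * norm y) * norm z" by (simp add: algebra_simps)
    thus "norm (transpose B *v y) \<le> opnorm2 B * norm y"
      unfolding z_def[symmetric]
      by (cases "norm z = 0") (simp_all add: opnorm2_nonneg mult_le_cancel_right)
  qed
  show ?thesis using le[of A] le[of "transpose A"] by simp
qed

lemma opnorm2_gram: "opnorm2 (A::real^'n^'n) ^ 2 \<le> opnorm2 (transpose A ** A)"
proof -
  have "opnorm2 A \<le> sqrt (opnorm2 (transpose A ** A))"
  proof (rule opnorm2_le)
    show "0 \<le> sqrt (opnorm2 (transpose A ** A))" by (simp add: opnorm2_nonneg)
    fix x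
    have "norm (A *v x) ^ 2 = x \<bullet> ((transpose A ** A) *v x)"
      using inner_matrix_vector_transpose[of x "transpose A" "A *v x"]
      by (simp add: dot_square_norm matrix_vector_mul_assoc)
    also have "\<dots> \<le> norm x * (opnorm2 (transpose A ** A) * norm x)"
      by (meson Cauchy_Schwarz_ineq2 abs_le_D1 mult_left_mono norm_ge_zero opnorm2_mult_vector
          order_trans)
    also have "\<dots> = (sqrt (opnorm2 (transpose A ** A)) * norm x) ^ 2"
      by (simp add: opnorm2_nonneg power_mult_distrib power2_eq_square)
    finally show "norm (A *v x) \<le> sqrt (opnorm2 (transpose A ** A)) * norm x"
      by (rule power2_le_imp_le) (simp add: opnorm2_nonneg)
  qed
  thus ?thesis using opnorm2_nonneg[of A] opnorm2_nonneg[of "transpose A ** A"]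
    by (metis power_mono real_sqrt_pow2)
qed

text \<open>The Neumann-series bound without the series: writing \<open>T = I + E\<close>, one has
  \<open>I - U = U E\<close>, and \<open>U\<close> expands norms by at most \<open>1 / (1 - \<parallel>E\<parallel>)\<close>.\<close>
lemma opnorm2_inverse_perturbation:
  fixes T U :: "real^'n^'n"
  assumes TU: "T ** U = mat 1" and small: "opnorm2 (T - mat 1) < 1"
  shows "opnorm2 (U - mat 1) \<le> opnorm2 (T - mat 1) / (1 - opnorm2 (T - mat 1))"
proof -
  define E where "E = T - mat 1"
  define e where "e = opnorm2 E"
  have e: "0 \<le> e" "e < 1" using small opnorm2_nonneg by (auto simp: e_def E_def)
  have U_bound: "(1 - e) * norm (U *v w) \<le> norm w" for w
  proof -
    have "w = U *v w + E *v (U *v w)"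
      by (simp add: E_def matrix_vector_mul_assoc matrix_diff_rdistrib TU algebra_simps)
    hence "norm (U *v w) - norm (E *v (U *v w)) \<le> norm w"
      by (metis norm_diff_ineq add_diff_cancel_right')
    thus ?thesis using opnorm2_mult_vector[of E "U *v w"] by (simp add: e_def algebra_simps)
  qed
  have "U ** T = mat 1" using TU matrix_left_right_inverse by blast
  hence "mat 1 - U = U ** E" by (simp add: E_def matrix_diff_ldistrib)
  hence UE: "norm ((U - mat 1) *v x) = norm (U *v (E *v x))" for x
    by (metis matrix_vector_mul_assoc matrix_vector_mult_diff_rdistrib norm_minus_commute)
  show ?thesis
  proof (rule opnorm2_le)
    show "0 \<le> opnorm2 (T - mat 1) / (1 - opnorm2 (T - mat 1))" using e by (simp add: e_def E_def)
    fix x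
    have "(1 - e) * norm ((U - mat 1) *v x) \<le> norm (E *v x)"
      using U_bound[of "E *v x"] by (simp add: UE)
    also have "\<dots> \<le> e * norm x" unfolding e_def by (rule opnorm2_mult_vector)
    finally show "norm ((U - mat 1) *v x) \<le> opnorm2 (T - mat 1) / (1 - opnorm2 (T - mat 1)) * norm x"
      using e by (simp add: e_def E_def field_simps)
  qed
qed

section \<open>Whitened error estimates\<close>

lemma whitened_inverse_error_bound:
  fixes Sig S :: "real^'n^'n" and c :: real
  assumes Sig: "spd_mat Sig" and S: "invertible S" and c: "c \<noteq> 0"
    and small: "opnorm2 ((1 / c) *\<^sub>R (minvsqrt Sig ** S ** minvsqrt Sig) - mat 1) \<le> 1/2"
  shows "opnorm2 (msqrt Sig ** (c *\<^sub>R matrix_inv S - matrix_inv Sig) ** msqrt Sig)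
    \<le> 2 * opnorm2 ((1 / c) *\<^sub>R (minvsqrt Sig ** S ** minvsqrt Sig) - mat 1)"
proof -
  define R Ri where "R = msqrt Sig" and "Ri = minvsqrt Sig"
  have R: "R ** Ri = mat 1" "Ri ** R = mat 1"
    using msqrt_minvsqrt[OF Sig] minvsqrt_msqrt[OF Sig] by (simp_all add: R_def Ri_def)
  define T U where "T = (1 / c) *\<^sub>R (Ri ** S ** Ri)" and "U = c *\<^sub>R (R ** matrix_inv S ** R)"
  define e where "e = opnorm2 (T - mat 1)"
  have "Ri ** S ** Ri ** (R ** matrix_inv S ** R) = Ri ** (S ** (Ri ** R) ** matrix_inv S) ** R"
    by (simp add: matrix_mul_assoc)
  hence "T ** U = mat 1"
    using c R matrix_inv_right[OF S]
    by (simp add: T_def U_def matrix_scaleR_mult_left matrix_scaleR_mult_right)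
  moreover have "e < 1" using small by (simp add: e_def T_def Ri_def)
  ultimately have "opnorm2 (U - mat 1) \<le> e / (1 - e)"
    unfolding e_def by (rule opnorm2_inverse_perturbation)
  also have "\<dots> \<le> 2 * e"
  proof -
    have "0 \<le> e" "e \<le> 1/2" using small opnorm2_nonneg by (simp_all add: e_def T_def Ri_def)
    moreover from this have "0 \<le> e * (1 - 2 * e)" by simp
    ultimately show ?thesis by (simp add: field_simps algebra_simps)
  qed
  also have "U - mat 1 = R ** (c *\<^sub>R matrix_inv S - matrix_inv Sig) ** R"
    using R by (simp add: U_def matrix_inv_minvsqrt[OF Sig, folded Ri_def] matrix_diff_ldistrib
        matrix_diff_rdistrib matrix_scaleR_mult_left matrix_scaleR_mult_right matrix_mul_assoc)
  finally show ?thesis by (simp add: e_def T_def R_def Ri_def)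
qed

lemma regression_error_decomposition:
  fixes Sig S C M :: "real^'n^'n" and c :: real
  assumes Sig: "invertible Sig" and c: "c \<noteq> 0"
  defines "DX \<equiv> c *\<^sub>R matrix_inv S - matrix_inv Sig"
    and "DY \<equiv> (1 / c) *\<^sub>R C - Sig ** M"
  shows "matrix_inv S ** C - M = matrix_inv Sig ** DY + DX ** DY + DX ** Sig ** M"
proof -
  have "matrix_inv S ** C = (matrix_inv Sig + DX) ** (DY + Sig ** M)"
    using c by (simp add: DX_def DY_def matrix_scaleR_mult_left matrix_scaleR_mult_right)
  also have "\<dots> = matrix_inv Sig ** DY + (matrix_inv Sig ** Sig) ** M + DX ** DY + DX ** Sig ** M"
    by (simp add: matrix_add_ldistrib matrix_add_rdistrib matrix_mul_assoc)
  finally show ?thesis using matrix_inv_left[OF Sig] by simp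
qed

text \<open>The cross factors \<open>A = (\<Sigma>\<^sup>\<pi>)\<^sup>1\<^sup>/\<^sup>2\<Sigma>\<^sup>-\<^sup>1\<^sup>/\<^sup>2\<close> and
  \<open>B = \<Sigma>\<^sup>1\<^sup>/\<^sup>2(\<Sigma>\<^sup>\<pi>)\<^sup>-\<^sup>1\<^sup>/\<^sup>2\<close> factor \<open>K = \<Sigma>\<^sup>-\<^sup>1\<^sup>/\<^sup>2\<Sigma>\<^sup>\<pi>\<Sigma>\<^sup>-\<^sup>1\<^sup>/\<^sup>2\<close>
  as \<open>K = A\<^sup>TA\<close> and its inverse as \<open>K\<^sup>-\<^sup>1 = BB\<^sup>T\<close>.\<close>
lemma opnorm2_cross_le_sqrt_cond2:
  fixes Sig SigP :: "real^'n^'n"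
  assumes Sig: "spd_mat Sig" and SigP: "spd_mat SigP"
  shows "opnorm2 (msqrt SigP ** minvsqrt Sig) * opnorm2 (msqrt Sig ** minvsqrt SigP)
    \<le> sqrt (cond2 (minvsqrt Sig ** SigP ** minvsqrt Sig))"
proof -
  define R Ri P Pi where "R = msqrt Sig" and "Ri = minvsqrt Sig" and "P = msqrt SigP"
    and "Pi = minvsqrt SigP"
  note defs = R_def Ri_def P_def Pi_def
  have sym: "transpose R = R" "transpose Ri = Ri" "transpose P = P" "transpose Pi = Pi"
    using msqrt_symmetric minvsqrt_symmetric Sig SigP by (simp_all add: defs)
  have inv: "R ** Ri = mat 1" "P ** Pi = mat 1"
    using msqrt_minvsqrt Sig SigP by (simp_all add: defs)
  define K where "K = Ri ** SigP ** Ri"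
  have "SigP = P ** P" using msqrt_square[OF SigP] by (simp add: P_def)
  hence K: "K = transpose (P ** Ri) ** (P ** Ri)"
    using sym by (simp add: K_def matrix_transpose_mul matrix_mul_assoc)
  have "Ri ** R = mat 1" using minvsqrt_msqrt[OF Sig] by (simp add: Ri_def R_def)
  hence "K ** (transpose (Pi ** R) ** (Pi ** R)) = mat 1"
    using sym inv by (simp add: K matrix_transpose_mul matrix_mul_assoc[symmetric]
        matrix_mul_inverse_cancel)
  hence Kinv: "matrix_inv K = transpose (Pi ** R) ** (Pi ** R)" by (rule matrix_inv_unique)
  have "opnorm2 (P ** Ri) ^ 2 \<le> opnorm2 K" unfolding K by (rule opnorm2_gram)
  moreover have "opnorm2 (R ** Pi) ^ 2 \<le> opnorm2 (matrix_inv K)"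
    using opnorm2_transpose[of "Pi ** R"] sym opnorm2_gram[of "Pi ** R"]
    by (simp add: Kinv matrix_transpose_mul)
  ultimately have "(opnorm2 (P ** Ri) * opnorm2 (R ** Pi))\<^sup>2 \<le> opnorm2 K * opnorm2 (matrix_inv K)"
    unfolding power_mult_distrib by (intro mult_mono) (simp_all add: opnorm2_nonneg)
  thus ?thesis unfolding cond2_def K_def defs by (rule real_le_rsqrt)
qed

lemma whitened_transition_error_bound:
  fixes Sig SigP S C M :: "real^'n^'n" and c :: real
  assumes Sig: "spd_mat Sig" and SigP: "spd_mat SigP" and c: "c \<noteq> 0"
    and M: "opnorm2 (msqrt SigP ** M ** minvsqrt SigP) \<le> 1"
  shows "opnorm2 (msqrt SigP ** (matrix_inv S ** C - M) ** minvsqrt SigP) \<le>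
     sqrt (cond2 (minvsqrt Sig ** SigP ** minvsqrt Sig)) *
       ((1 + opnorm2 (msqrt Sig ** (c *\<^sub>R matrix_inv S - matrix_inv Sig) ** msqrt Sig))
         * (1 + opnorm2 (minvsqrt Sig ** ((1 / c) *\<^sub>R C - Sig ** M) ** minvsqrt Sig)) - 1)"
proof -
  define R Ri P Pi where "R = msqrt Sig" and "Ri = minvsqrt Sig" and "P = msqrt SigP"
    and "Pi = minvsqrt SigP"
  define DX DY where "DX = c *\<^sub>R matrix_inv S - matrix_inv Sig" and "DY = (1 / c) *\<^sub>R C - Sig ** M"
  define a b x y m where "a = opnorm2 (P ** Ri)" and "b = opnorm2 (R ** Pi)"
    and "x = opnorm2 (R ** DX ** R)" and "y = opnorm2 (Ri ** DY ** Ri)" and "m = opnorm2 (P ** M ** Pi)"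
  have nonneg: "0 \<le> a" "0 \<le> b" "0 \<le> x" "0 \<le> y"
    by (simp_all add: a_def b_def x_def y_def opnorm2_nonneg)
  have "m \<le> 1" using M by (simp add: m_def P_def Pi_def)
  have cancel: "R ** (Ri ** X) = X" "Ri ** (R ** X) = X" "P ** (Pi ** X) = X" "Pi ** (P ** X) = X"
    for X
    using msqrt_minvsqrt[OF Sig] minvsqrt_msqrt[OF Sig] msqrt_minvsqrt[OF SigP] minvsqrt_msqrt[OF SigP]
    by (simp_all add: R_def Ri_def P_def Pi_def matrix_mul_inverse_cancel)
  have Sig_eq: "Sig = R ** R" "matrix_inv Sig = Ri ** Ri"
    using msqrt_square[OF Sig] matrix_inv_minvsqrt[OF Sig] by (simp_all add: R_def Ri_def)
  have "P ** (matrix_inv S ** C - M) ** Pi = (P ** Ri) ** (Ri ** DY ** Ri) ** (R ** Pi)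
     + (P ** Ri) ** (R ** DX ** R) ** (Ri ** DY ** Ri) ** (R ** Pi)
     + (P ** Ri) ** (R ** DX ** R) ** (R ** Pi) ** (P ** M ** Pi)"
    unfolding regression_error_decomposition[OF spd_imp_invertible[OF Sig] c, of S C M,
        folded DX_def DY_def]
    unfolding Sig_eq(2) unfolding Sig_eq(1)
    by (simp add: matrix_add_ldistrib matrix_add_rdistrib matrix_mul_assoc[symmetric] cancel)
  have "opnorm2 (P ** (matrix_inv S ** C - M) ** Pi)
    \<le> opnorm2 ((P ** Ri) ** (Ri ** DY ** Ri) ** (R ** Pi))
      + opnorm2 ((P ** Ri) ** (R ** DX ** R) ** (Ri ** DY ** Ri) ** (R ** Pi))
      + opnorm2 ((P ** Ri) ** (R ** DX ** R) ** (R ** Pi) ** (P ** M ** Pi))"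
    unfolding \<open>P ** (matrix_inv S ** C - M) ** Pi = _\<close>
    by (rule order_trans[OF opnorm2_add add_right_mono[OF opnorm2_add]])
  also have "\<dots> \<le> a * y * b + a * x * y * b + a * x * b * m"
    unfolding a_def b_def x_def y_def m_def by (intro add_mono opnorm2_mult3 opnorm2_mult4)
  also have "\<dots> \<le> (a * b) * ((1 + x) * (1 + y) - 1)"
    using nonneg \<open>m \<le> 1\<close> mult_left_le[of m "a * x * b"] by (simp add: algebra_simps)
  also have "\<dots> \<le> sqrt (cond2 (Ri ** SigP ** Ri)) * ((1 + x) * (1 + y) - 1)"
    using opnorm2_cross_le_sqrt_cond2[OF Sig SigP] nonneg
    by (intro mult_right_mono) (simp_all add: a_def b_def R_def Ri_def P_def Pi_def algebra_simps)
  finally show ?thesis by (simp add: R_def Ri_def P_def Pi_def DX_def DY_def x_def y_def)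
qed

lemma opnorm2_matpow_perturbation:
  fixes B B' :: "real^'n^'n"
  assumes B: "opnorm2 B \<le> 1" and d: "opnorm2 (B' - B) \<le> d"
  shows "opnorm2 (matpow B' h) \<le> (1 + d) ^ h
    \<and> opnorm2 (matpow B' h - matpow B h) \<le> (1 + d) ^ h - 1"
proof (induction h)
  case 0
  show ?case using opnorm2_mat_1 by (simp add: opnorm2_zero)
next
  case (Suc h)
  have d0: "0 \<le> d" using d opnorm2_nonneg order_trans by blast
  have "opnorm2 B' \<le> opnorm2 B + opnorm2 (B' - B)" using opnorm2_add[of B "B' - B"] by simp
  hence B': "opnorm2 B' \<le> 1 + d" using B d by simp
  have "opnorm2 (matpow B' (Suc h)) \<le> opnorm2 B' * opnorm2 (matpow B' h)"
    by (simp add: opnorm2_mult)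
  also have "\<dots> \<le> (1 + d) * (1 + d) ^ h"
    using Suc.IH B' d0 by (intro mult_mono) (simp_all add: opnorm2_nonneg)
  finally have power: "opnorm2 (matpow B' (Suc h)) \<le> (1 + d) ^ Suc h" by simp
  have "matpow B' (Suc h) - matpow B (Suc h)
      = (B' - B) ** matpow B' h + B ** (matpow B' h - matpow B h)"
    by (simp add: matrix_diff_ldistrib matrix_diff_rdistrib)
  hence "opnorm2 (matpow B' (Suc h) - matpow B (Suc h))
      \<le> opnorm2 (B' - B) * opnorm2 (matpow B' h) + opnorm2 B * opnorm2 (matpow B' h - matpow B h)"
    by (metis order_trans[OF opnorm2_add add_mono[OF opnorm2_mult opnorm2_mult]])
  also have "\<dots> \<le> d * (1 + d) ^ h + 1 * ((1 + d) ^ h - 1)"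
    using Suc.IH B d by (intro add_mono mult_mono) (simp_all add: opnorm2_nonneg d0)
  finally show ?case using power by (simp add: algebra_simps)
qed

lemma sqrt_inner_matrix_inv:
  fixes A :: "real^'n^'n"
  assumes "spd_mat A"
  shows "sqrt (v \<bullet> (matrix_inv A *v v)) = norm (minvsqrt A *v v)"
proof -
  have "v \<bullet> (matrix_inv A *v v) = (minvsqrt A *v v) \<bullet> (minvsqrt A *v v)"
    using inner_matrix_vector_transpose[of v "minvsqrt A" "minvsqrt A *v v"]
    by (simp add: matrix_inv_minvsqrt[OF assms] minvsqrt_symmetric[OF assms] matrix_vector_mul_assoc)
  thus ?thesis by (simp add: dot_square_norm)
qed

lemma norm_minvsqrt_change:
  fixes Sig SigP :: "real^'n^'n"
  assumes Sig: "spd_mat Sig" and SigP: "spd_mat SigP"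
  shows "norm (minvsqrt Sig *v z) \<le> opnorm2 (msqrt SigP ** minvsqrt Sig) * norm (minvsqrt SigP *v z)"
proof -
  have "msqrt SigP *v (minvsqrt SigP *v z) = z"
    by (simp add: matrix_vector_mul_assoc msqrt_minvsqrt[OF SigP])
  hence "minvsqrt Sig *v z = (minvsqrt Sig ** msqrt SigP) *v (minvsqrt SigP *v z)"
    by (simp add: matrix_vector_mul_assoc[symmetric])
  moreover have "opnorm2 (minvsqrt Sig ** msqrt SigP) = opnorm2 (msqrt SigP ** minvsqrt Sig)"
    using opnorm2_transpose[of "msqrt SigP ** minvsqrt Sig"]
    by (simp add: matrix_transpose_mul msqrt_symmetric[OF SigP] minvsqrt_symmetric[OF Sig])
  ultimately show ?thesis by (metis opnorm2_mult_vector)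
qed

lemma whitened_error_term_bound:
  fixes Sig X :: "real^'n^'n" and p q w :: "real^'n"
  assumes Sig: "spd_mat Sig"
  shows "\<bar>(p v* (matrix_inv Sig + X) - q v* matrix_inv Sig) \<bullet> w\<bar>
    \<le> (norm (minvsqrt Sig *v (p - q)) + norm (minvsqrt Sig *v p) * opnorm2 (msqrt Sig ** X ** msqrt Sig))
       * norm (minvsqrt Sig *v w)"
proof -
  define R Ri where "R = msqrt Sig" and "Ri = minvsqrt Sig"
  have Ri: "transpose Ri = Ri" "matrix_inv Sig = Ri ** Ri"
    using minvsqrt_symmetric[OF Sig] matrix_inv_minvsqrt[OF Sig] by (simp_all add: Ri_def)
  have RRi: "R *v (Ri *v z) = z" "Ri *v (R *v z) = z" for z
    using msqrt_minvsqrt[OF Sig] minvsqrt_msqrt[OF Sig]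
    by (simp_all add: R_def Ri_def matrix_vector_mul_assoc)
  have "(p v* (matrix_inv Sig + X) - q v* matrix_inv Sig) \<bullet> w
      = (p - q) \<bullet> (Ri *v (Ri *v w)) + p \<bullet> (Ri *v ((R ** X ** R) *v (Ri *v w)))"
    by (simp add: Ri dot_lmul_matrix inner_diff_left inner_add_right matrix_vector_mult_add_rdistrib
        matrix_vector_mul_assoc[symmetric] RRi)
  also have "\<dots> = (Ri *v (p - q)) \<bullet> (Ri *v w) + (Ri *v p) \<bullet> ((R ** X ** R) *v (Ri *v w))"
    using Ri by (simp add: inner_matrix_vector_transpose)
  finally have "\<bar>(p v* (matrix_inv Sig + X) - q v* matrix_inv Sig) \<bullet> w\<bar>
      \<le> norm (Ri *v (p - q)) * norm (Ri *v w) + norm (Ri *v p) * norm ((R ** X ** R) *v (Ri *v w))"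
    by (simp only: order_trans[OF abs_triangle_ineq add_mono[OF Cauchy_Schwarz_ineq2 Cauchy_Schwarz_ineq2]])
  also have "\<dots> \<le> norm (Ri *v (p - q)) * norm (Ri *v w)
      + norm (Ri *v p) * (opnorm2 (R ** X ** R) * norm (Ri *v w))"
    by (intro add_left_mono mult_left_mono opnorm2_mult_vector) simp
  finally show ?thesis by (simp add: R_def Ri_def algebra_simps)
qed

text \<open>In the coordinates \<open>(\<Sigma>\<^sup>\<pi>)\<^sup>-\<^sup>1\<^sup>/\<^sup>2\<close> the iteration by
  \<open>M\<^sup>T\<close> becomes iteration by a contraction, and that by \<open>M'\<^sup>T\<close> a perturbation of it.\<close>
lemma whitened_iterate_bounds:
  fixes Sig SigP M M' :: "real^'n^'n" and v :: "real^'n"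
  assumes Sig: "spd_mat Sig" and SigP: "spd_mat SigP"
    and M: "opnorm2 (msqrt SigP ** M ** minvsqrt SigP) \<le> 1"
  defines "d \<equiv> opnorm2 (msqrt SigP ** (M' - M) ** minvsqrt SigP)"
    and "a \<equiv> opnorm2 (msqrt SigP ** minvsqrt Sig)"
  shows "norm (minvsqrt Sig *v (matpow (transpose M') h *v v))
      \<le> a * ((1 + d) ^ h * norm (minvsqrt SigP *v v))"
    and "norm (minvsqrt Sig *v (matpow (transpose M') h *v v - matpow (transpose M) h *v v))
      \<le> a * (((1 + d) ^ h - 1) * norm (minvsqrt SigP *v v))"
proof -
  define P Pi where "P = msqrt SigP" and "Pi = minvsqrt SigP"
  have sym: "transpose P = P" "transpose Pi = Pi"
    using msqrt_symmetric minvsqrt_symmetric SigP by (simp_all add: P_def Pi_def)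
  have PPi: "P *v (Pi *v z) = z" for z
    using msqrt_minvsqrt[OF SigP] by (simp add: P_def Pi_def matrix_vector_mul_assoc)
  have whiten: "Pi *v (matpow (transpose A) h *v v) = matpow (transpose (P ** A ** Pi)) h *v (Pi *v v)"
    for A :: "real^'n^'n"
  proof -
    have "transpose (P ** A ** Pi) = Pi ** transpose A ** P"
      using sym by (simp add: matrix_transpose_mul matrix_mul_assoc)
    thus ?thesis using matpow_similar[of Pi P "transpose A" h] minvsqrt_msqrt[OF SigP]
      by (simp add: P_def Pi_def matrix_vector_mul_assoc[symmetric] PPi[unfolded P_def Pi_def])
  qed
  define B B' where "B = transpose (P ** M ** Pi)" and "B' = transpose (P ** M' ** Pi)"
  have "B' - B = transpose (P ** (M' - M) ** Pi)"
    by (simp add: B_def B'_def transpose_diff matrix_diff_ldistrib matrix_diff_rdistrib)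
  hence "opnorm2 (B' - B) \<le> d" by (simp add: opnorm2_transpose d_def P_def Pi_def)
  moreover have "opnorm2 B \<le> 1" using M by (simp add: B_def opnorm2_transpose P_def Pi_def)
  ultimately have pert: "opnorm2 (matpow B' h) \<le> (1 + d) ^ h"
      "opnorm2 (matpow B' h - matpow B h) \<le> (1 + d) ^ h - 1"
    using opnorm2_matpow_perturbation by blast+
  have "norm (Pi *v (matpow (transpose M') h *v v)) \<le> (1 + d) ^ h * norm (Pi *v v)"
    unfolding whiten B'_def[symmetric]
    by (rule order_trans[OF opnorm2_mult_vector mult_right_mono[OF pert(1) norm_ge_zero]])
  thus "norm (minvsqrt Sig *v (matpow (transpose M') h *v v))
      \<le> a * ((1 + d) ^ h * norm (minvsqrt SigP *v v))"
    unfolding a_def Pi_def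
    by (rule order_trans[OF norm_minvsqrt_change[OF Sig SigP] mult_left_mono])
      (simp_all add: opnorm2_nonneg Pi_def)
  have "Pi *v (matpow (transpose M') h *v v - matpow (transpose M) h *v v)
      = (matpow B' h - matpow B h) *v (Pi *v v)"
    by (simp add: matrix_vector_mult_diff_distrib matrix_vector_mult_diff_rdistrib whiten B_def B'_def)
  hence "norm (Pi *v (matpow (transpose M') h *v v - matpow (transpose M) h *v v))
      \<le> ((1 + d) ^ h - 1) * norm (Pi *v v)"
    by (metis order_trans[OF opnorm2_mult_vector mult_right_mono[OF pert(2) norm_ge_zero]])
  thus "norm (minvsqrt Sig *v (matpow (transpose M') h *v v - matpow (transpose M) h *v v))
      \<le> a * (((1 + d) ^ h - 1) * norm (minvsqrt SigP *v v))"
    unfolding a_def Pi_def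
    by (rule order_trans[OF norm_minvsqrt_change[OF Sig SigP] mult_left_mono])
      (simp_all add: opnorm2_nonneg Pi_def)
qed

lemma weighted_evaluation_error_bound:
  fixes Sig SigP S M M' :: "real^'n^'n" and c :: real and v :: "real^'n"
    and W :: "nat \<Rightarrow> real^'n" and H :: nat
  assumes Sig: "spd_mat Sig" and SigP: "spd_mat SigP"
    and M: "opnorm2 (msqrt SigP ** M ** minvsqrt SigP) \<le> 1"
  shows "\<bar>\<Sum>h=0..H. (c *\<^sub>R ((matpow (transpose M') h *v v) v* matrix_inv S)
              - (matpow (transpose M) h *v v) v* matrix_inv Sig) \<bullet> W h\<bar>
    \<le> (\<Sum>h=0..H. sqrt (v \<bullet> (matrix_inv SigP *v v))
          * opnorm2 (msqrt SigP ** minvsqrt Sig) * norm (minvsqrt Sig *v W h)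
          * ((1 + opnorm2 (msqrt SigP ** (M' - M) ** minvsqrt SigP)) ^ h
              * (1 + opnorm2 (msqrt Sig ** (c *\<^sub>R matrix_inv S - matrix_inv Sig) ** msqrt Sig)) - 1))"
proof -
  define X where "X = c *\<^sub>R matrix_inv S - matrix_inv Sig"
  define a d x c0 where "a = opnorm2 (msqrt SigP ** minvsqrt Sig)"
    and "d = opnorm2 (msqrt SigP ** (M' - M) ** minvsqrt SigP)"
    and "x = opnorm2 (msqrt Sig ** X ** msqrt Sig)" and "c0 = norm (minvsqrt SigP *v v)"
  define p q where "p h = matpow (transpose M') h *v v" and "q h = matpow (transpose M) h *v v" for h
  have term_bound: "\<bar>(c *\<^sub>R (p h v* matrix_inv S) - q h v* matrix_inv Sig) \<bullet> W h\<bar>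
      \<le> c0 * a * norm (minvsqrt Sig *v W h) * ((1 + d) ^ h * (1 + x) - 1)" for h
  proof -
    have "c *\<^sub>R (p h v* matrix_inv S) = p h v* (matrix_inv Sig + X)"
      by (simp add: X_def vector_scaleR_matrix_ac)
    hence "\<bar>(c *\<^sub>R (p h v* matrix_inv S) - q h v* matrix_inv Sig) \<bullet> W h\<bar>
        \<le> (norm (minvsqrt Sig *v (p h - q h)) + norm (minvsqrt Sig *v p h) * x)
          * norm (minvsqrt Sig *v W h)"
      using whitened_error_term_bound[OF Sig] by (simp add: x_def)
    also have "\<dots> \<le> (a * (((1 + d) ^ h - 1) * c0) + a * ((1 + d) ^ h * c0) * x)
          * norm (minvsqrt Sig *v W h)"
      using whitened_iterate_bounds[OF Sig SigP M, of M' h v]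
      by (intro mult_right_mono add_mono) (simp_all add: p_def q_def a_def d_def c0_def x_def opnorm2_nonneg)
    finally show ?thesis by (simp add: algebra_simps)
  qed
  have "\<bar>\<Sum>h=0..H. (c *\<^sub>R (p h v* matrix_inv S) - q h v* matrix_inv Sig) \<bullet> W h\<bar>
      \<le> (\<Sum>h=0..H. \<bar>(c *\<^sub>R (p h v* matrix_inv S) - q h v* matrix_inv Sig) \<bullet> W h\<bar>)"
    by (rule sum_abs)
  also have "\<dots> \<le> (\<Sum>h=0..H. c0 * a * norm (minvsqrt Sig *v W h) * ((1 + d) ^ h * (1 + x) - 1))"
    by (intro sum_mono term_bound)
  finally show ?thesis
    by (simp add: p_def q_def c0_def a_def d_def x_def X_def sqrt_inner_matrix_inv[OF SigP])
qed

theorem lemma7: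
  fixes phi :: "'s \<Rightarrow> 'a \<Rightarrow> real^'d"
    and pol :: "'s \<Rightarrow> 'a measure" and xi0 :: "'s measure"
    and Q :: "nat \<Rightarrow> 's \<Rightarrow> 'a \<Rightarrow> real"
    and H N :: nat and lam :: real
    and s s' :: "nat \<Rightarrow> 's" and a :: "nat \<Rightarrow> 'a" and r' :: "nat \<Rightarrow> real"
    and M Sig SigP :: "real^'d^'d"
  defines "Shat \<equiv> Sigma_hat phi lam N s a"
    and "Mhat \<equiv> M_hat phi pol lam N s a s'"
    and "v0 \<equiv> nu0 phi pol xi0"
    and "nu \<equiv> (\<lambda>h. matpow (transpose M) h *v nu0 phi pol xi0)"
    and "nuhat \<equiv> (\<lambda>h. matpow (transpose (M_hat phi pol lam N s a s')) h *v nu0 phi pol xi0)"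
    and "DX \<equiv> real N *\<^sub>R matrix_inv (Sigma_hat phi lam N s a) - matrix_inv Sig"
    and "DM \<equiv> M_hat phi pol lam N s a s' - M"
    and "DY \<equiv> (1 / real N) *\<^sub>R (\<Sum>n=1..N. outer (phi (s n) (a n)) (phi_pi phi pol (s' n))) - Sig ** M"
    and "DW \<equiv> (\<lambda>h. (1 / real N) *\<^sub>R (\<Sum>n=1..N.
                 (Q h (s n) (a n) - r' n - V_pi Q pol H (h + 1) (s' n)) *\<^sub>R phi (s n) (a n)))"
    and "kappa1 \<equiv> cond2 (minvsqrt Sig ** SigP ** minvsqrt Sig)"
  assumes N_pos: "0 < N" and lam_nonneg: "0 \<le> lam"
    and Sig_spd: "spd_mat Sig" and SigP_spd: "spd_mat SigP"
    and Shat_inv: "invertible Shat"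
    and M_contr: "opnorm2 (msqrt SigP ** M ** minvsqrt SigP) \<le> 1"
  shows "(\<bar>\<Sum>h=0..H. (real N *\<^sub>R (nuhat h v* matrix_inv Shat) - nu h v* matrix_inv Sig) \<bullet> DW h\<bar> \<le> (\<Sum>h=0..H. sqrt (v0 \<bullet> (matrix_inv SigP *v v0))
              * opnorm2 (msqrt SigP ** minvsqrt Sig) * norm (minvsqrt Sig *v DW h)
              * ((1 + opnorm2 (msqrt SigP ** DM ** minvsqrt SigP)) ^ h
                   * (1 + opnorm2 (msqrt Sig ** DX ** msqrt Sig)) - 1)))
    \<and> (opnorm2 (msqrt SigP ** DM ** minvsqrt SigP) \<le> sqrt kappa1 *
           ((1 + opnorm2 (msqrt Sig ** DX ** msqrt Sig))
             * (1 + opnorm2 (minvsqrt Sig ** DY ** minvsqrt Sig)) - 1))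
    \<and> (opnorm2 ((1 / real N) *\<^sub>R (minvsqrt Sig ** Shat ** minvsqrt Sig) - mat 1) \<le> 1/2 \<longrightarrow>
           opnorm2 (msqrt Sig ** DX ** msqrt Sig)
             \<le> 2 * opnorm2 ((1 / real N) *\<^sub>R (minvsqrt Sig ** Shat ** minvsqrt Sig) - mat 1))"
proof -
  define C where "C = (\<Sum>n=1..N. outer (phi (s n) (a n)) (phi_pi phi pol (s' n)))"
  have N: "real N \<noteq> 0" using N_pos by simp
  have Mhat: "Mhat = matrix_inv Shat ** C" by (simp add: Mhat_def Shat_def M_hat_def C_def)
  have defs: "DX = real N *\<^sub>R matrix_inv Shat - matrix_inv Sig" "DM = Mhat - M"
      "DY = (1 / real N) *\<^sub>R C - Sig ** M" "nuhat = (\<lambda>h. matpow (transpose Mhat) h *v v0)"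
      "nu = (\<lambda>h. matpow (transpose M) h *v v0)"
    by (simp_all add: DX_def Shat_def DM_def Mhat_def DY_def C_def nuhat_def nu_def v0_def)
  show ?thesis
    unfolding defs kappa1_def
    using weighted_evaluation_error_bound[OF Sig_spd SigP_spd M_contr]
      whitened_transition_error_bound[OF Sig_spd SigP_spd N M_contr, of Shat C, folded Mhat]
      whitened_inverse_error_bound[OF Sig_spd Shat_inv N]
    by blast
qed

end
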